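(* Let $\{\alpha_{i,j,k}\}_{1\le i,j,k\le d}$ be real numbers such that $\alpha_{\pi(i),\pi(j),\pi(k)}=\alpha_{i,j,k}$ for every $(i,j,k)$ and every permutation $\pi$ of $(i,j,k)$. Suppose the system $$\frac{\partial\varphi}{\partial t_i}=\sum_{j,k}\alpha_{i,j,k}t_j\frac{\partial\varphi}{\partial t_k}+t_i\varphi,\qquad i=1,\dots,d,$$ has a solution $\varphi$ of class $C^2$ on a neighborhood $V$ of $\mathbf 0\in\mathbb R^d$ with $\varphi(\mathbf 0)\ne0$. For $k=1,\dots,d$ let $A_k:=(\alpha_{k,r,s})_{1\le r,s\le d}$ and for $i,j$ let $C_{i,j}:=[A_i,A_j]=A_iA_j-A_jA_i$. Then for all $(i,j)\in\{1,\dots,d\}^2$ and all $\mathbf t=(t_1,\dots,t_d)$ in a neighborhood of $\mathbf 0$, $$\big(C_{i,j}\mathbf t\big)\cdot\Big(\big(I-t_1A_1-\cdots-t_dA_d\big)^{-1}\mathbf t\Big)=0,$$ where $I$ is the $d\times d$ identity matrix and $\cdot$ is the standard inner product on $\mathbb R^d$. *)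

theory Defs
  imports "HOL-Analysis.Analysis"
begin

definition coefmat :: "('n::finite \<Rightarrow> 'n \<Rightarrow> 'n \<Rightarrow> real) \<Rightarrow> 'n \<Rightarrow> real^'n^'n" where
  "coefmat \<alpha> k = (\<chi> r s. \<alpha> k r s)"

definition commut :: "('n::finite \<Rightarrow> 'n \<Rightarrow> 'n \<Rightarrow> real) \<Rightarrow> 'n \<Rightarrow> 'n \<Rightarrow> real^'n^'n" where
  "commut \<alpha> i j = coefmat \<alpha> i ** coefmat \<alpha> j - coefmat \<alpha> j ** coefmat \<alpha> i"

end

theory Submission
  imports Defs
begin

(* Write B(w) = w_1 A_1 + ... + w_d A_d; by the symmetry of alpha, B(w)_ij = sum_k alpha_ijk w_k,
   so with L = I - B(t) the system reads L grad(phi) = phi t. Differentiating it once more gives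
   L H = B(grad phi) + phi I + t grad(phi)^T for the Hessian H. Where L is invertible, put
   N = L^-1 and w = N t; then grad(phi) = phi w and H = N B(grad phi) + phi N + phi w w^T.
   H is symmetric by Schwarz's theorem and N, B(grad phi) are symmetric, so transposing shows
   that N, hence L and B(t), commute with B(grad phi) = phi B(w). Where phi is nonzero, B(w)
   commutes with B(t), and the total symmetry of alpha turns (C_ij t) . w into the (i,j) entry
   of the commutator [B(w), B(t)]. *)

section \<open>Symmetry of second derivatives\<close>

definition second_difference :: "('a::real_vector \<Rightarrow> real) \<Rightarrow> 'a \<Rightarrow> 'a \<Rightarrow> 'a \<Rightarrow> real \<Rightarrow> real" where
  "second_difference f x a b h = f (x + h *\<^sub>R a + h *\<^sub>R b) - f (x + h *\<^sub>R a) - f (x + h *\<^sub>R b) + f x"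

lemma second_difference_commute: "second_difference f x a b = second_difference f x b a"
  by (simp add: fun_eq_iff second_difference_def algebra_simps)

lemma has_real_derivative_along_line:
  fixes f :: "'a::real_normed_vector \<Rightarrow> real"
  assumes "(f has_derivative f') (at (x + s *\<^sub>R a))"
  shows "((\<lambda>s. f (x + s *\<^sub>R a)) has_real_derivative f' a) (at s)"
proof -
  have "((\<lambda>s. x + s *\<^sub>R a) has_derivative (\<lambda>r. r *\<^sub>R a)) (at s)"
    by (auto intro!: derivative_eq_intros)
  from has_derivative_compose[OF this assms] show ?thesis
    by (rule has_derivative_imp_has_field_derivative)
      (simp add: linear_cmul[OF has_derivative_linear[OF assms]])
qed

lemma second_difference_mean_value:
  fixes f :: "'a::real_normed_vector \<Rightarrow> real"
  assumes "h > 0"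
    and rect: "\<And>s r. s \<in> {0..h} \<Longrightarrow> r \<in> {0..h} \<Longrightarrow> x + s *\<^sub>R a + r *\<^sub>R b \<in> S"
    and D1: "\<And>y. y \<in> S \<Longrightarrow> (f has_derivative blinfun_apply (Df y)) (at y)"
    and D2: "\<And>y. y \<in> S \<Longrightarrow> (Df has_derivative blinfun_apply (D2f y)) (at y)"
  shows "\<exists>s\<in>{0..h}. \<exists>r\<in>{0..h}.
    second_difference f x a b h = h * h * D2f (x + s *\<^sub>R a + r *\<^sub>R b) b a"
proof -
  define g where "g s = f (x + h *\<^sub>R b + s *\<^sub>R a) - f (x + s *\<^sub>R a)" for s
  obtain s where s: "0 < s" "s < h"
    and g: "g h - g 0 = (h - 0) * (Df (x + h *\<^sub>R b + s *\<^sub>R a) a - Df (x + s *\<^sub>R a) a)"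
  proof (atomize_elim, rule MVT2[OF \<open>h > 0\<close>])
    fix s assume "0 \<le> s" "s \<le> h"
    then have "x + h *\<^sub>R b + s *\<^sub>R a \<in> S" "x + s *\<^sub>R a \<in> S"
      using rect[of s h] rect[of s 0] \<open>h > 0\<close> by (simp_all add: algebra_simps)
    then show "(g has_real_derivative Df (x + h *\<^sub>R b + s *\<^sub>R a) a - Df (x + s *\<^sub>R a) a) (at s)"
      unfolding g_def by (intro DERIV_diff has_real_derivative_along_line D1)
  qed
  define k where "k r = Df (x + s *\<^sub>R a + r *\<^sub>R b) a" for r
  obtain r where r: "0 < r" "r < h" and k: "k h - k 0 = (h - 0) * D2f (x + s *\<^sub>R a + r *\<^sub>R b) b a"
  proof (atomize_elim, rule MVT2[OF \<open>h > 0\<close>])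
    fix r assume "0 \<le> r" "r \<le> h"
    then have "x + s *\<^sub>R a + r *\<^sub>R b \<in> S" using rect s by simp
    then have "((\<lambda>y. Df y a) has_derivative (\<lambda>v. D2f (x + s *\<^sub>R a + r *\<^sub>R b) v a))
        (at (x + s *\<^sub>R a + r *\<^sub>R b))"
      using D2 by (auto intro!: derivative_eq_intros)
    then show "(k has_real_derivative D2f (x + s *\<^sub>R a + r *\<^sub>R b) b a) (at r)"
      unfolding k_def by (rule has_real_derivative_along_line)
  qed
  have "second_difference f x a b h = g h - g 0"
    unfolding g_def second_difference_def by (simp add: algebra_simps)
  also have "\<dots> = h * (k h - k 0)"
    unfolding g k_def by (simp add: algebra_simps)
  finally show ?thesis
    using s r k by (intro bexI[of _ s] bexI[of _ r]) auto
qed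

lemma second_difference_quotient_tendsto:
  fixes f :: "'a::real_normed_vector \<Rightarrow> real"
  assumes S: "open S" "x \<in> S"
    and D1: "\<And>y. y \<in> S \<Longrightarrow> (f has_derivative blinfun_apply (Df y)) (at y)"
    and D2: "\<And>y. y \<in> S \<Longrightarrow> (Df has_derivative blinfun_apply (D2f y)) (at y)"
    and cont: "isCont D2f x"
  shows "((\<lambda>h. second_difference f x a b h / (h * h)) \<longlongrightarrow> D2f x b a) (at_right 0)"
proof (rule tendstoI)
  fix e :: real assume "e > 0"
  define c where "c = norm a * norm b + 1"
  have "c > 0" unfolding c_def by (simp add: add_nonneg_pos)
  obtain d1 where "d1 > 0" and d1: "\<And>y. dist y x < d1 \<Longrightarrow> dist (D2f y) (D2f x) < e / c"
    using cont \<open>e > 0\<close> \<open>c > 0\<close> unfolding continuous_at_eps_delta by (meson divide_pos_pos)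
  obtain d2 where "d2 > 0" and d2: "ball x d2 \<subseteq> S"
    using S open_contains_ball by blast
  have "((\<lambda>h. h * (norm a + norm b)) \<longlongrightarrow> 0 * (norm a + norm b)) (at_right 0)"
    by (intro tendsto_intros)
  then have "eventually (\<lambda>h. h * (norm a + norm b) < min d1 d2) (at_right 0)"
    using \<open>d1 > 0\<close> \<open>d2 > 0\<close> by (intro order_tendstoD) auto
  then show "eventually (\<lambda>h. dist (second_difference f x a b h / (h * h)) (D2f x b a) < e)
      (at_right 0)"
    using eventually_at_right_less[of 0]
  proof eventually_elim
    case (elim h)
    have near: "dist (x + s *\<^sub>R a + r *\<^sub>R b) x < min d1 d2" if "s \<in> {0..h}" "r \<in> {0..h}" for s r
    proof -
      have "dist (x + s *\<^sub>R a + r *\<^sub>R b) x \<le> s * norm a + r * norm b"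
        using that norm_triangle_ineq[of "s *\<^sub>R a" "r *\<^sub>R b"] by (simp add: dist_norm add.assoc)
      also have "\<dots> \<le> h * (norm a + norm b)"
        using that by (simp add: distrib_left add_mono mult_right_mono)
      finally show ?thesis using elim by linarith
    qed
    then obtain s r where "s \<in> {0..h}" "r \<in> {0..h}"
      and eq: "second_difference f x a b h = h * h * D2f (x + s *\<^sub>R a + r *\<^sub>R b) b a"
      using second_difference_mean_value[OF elim(2), of x a b S f Df D2f] D1 D2 d2
      by (force simp: dist_commute)
    define y where "y = x + s *\<^sub>R a + r *\<^sub>R b"
    have "norm (D2f y - D2f x) < e / c"
      using d1 near[OF \<open>s \<in> _\<close> \<open>r \<in> _\<close>] unfolding y_def dist_norm by simp
    have "\<bar>(D2f y - D2f x) b a\<bar> \<le> norm ((D2f y - D2f x) b) * norm a"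
      using norm_blinfun[of "(D2f y - D2f x) b" a] by simp
    also have "\<dots> \<le> norm (D2f y - D2f x) * norm b * norm a"
      by (intro mult_right_mono norm_blinfun norm_ge_zero)
    also have "\<dots> = norm (D2f y - D2f x) * (norm a * norm b)"
      by (simp add: mult_ac)
    also have "\<dots> \<le> e / c * (norm a * norm b)"
      using \<open>norm (D2f y - D2f x) < e / c\<close> by (intro mult_right_mono) auto
    also have "\<dots> < e / c * c"
      using \<open>e > 0\<close> \<open>c > 0\<close> unfolding c_def by (intro mult_strict_left_mono) auto
    finally show ?case
      using eq \<open>c > 0\<close> elim(2) by (simp add: dist_real_def y_def blinfun.diff_left)
  qed
qed

theorem second_derivative_symmetric:
  fixes f :: "'a::real_normed_vector \<Rightarrow> real"
  assumes "open S" "x \<in> S"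
    and "\<And>y. y \<in> S \<Longrightarrow> (f has_derivative blinfun_apply (Df y)) (at y)"
    and "\<And>y. y \<in> S \<Longrightarrow> (Df has_derivative blinfun_apply (D2f y)) (at y)"
    and "isCont D2f x"
  shows "D2f x a b = D2f x b a"
proof -
  have "((\<lambda>h. second_difference f x b a h / (h * h)) \<longlongrightarrow> D2f x a b) (at_right 0)"
    by (rule second_difference_quotient_tendsto[OF assms])
  then have "((\<lambda>h. second_difference f x a b h / (h * h)) \<longlongrightarrow> D2f x a b) (at_right 0)"
    by (simp only: second_difference_commute[of f x b a])
  with second_difference_quotient_tendsto[OF assms] show ?thesis
    using tendsto_unique[OF trivial_limit_at_right_real] by blast
qed

definition outer_prod :: "'a::times^'m \<Rightarrow> 'a^'n \<Rightarrow> 'a^'n^'m" where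
  "outer_prod x y = (\<chi> i j. x $ i * y $ j)"

lemma matrix_mul_outer_prod: "A ** outer_prod x y = outer_prod (A *v x) y"
  by (simp add: vec_eq_iff outer_prod_def matrix_matrix_mult_def matrix_vector_mult_def
      sum_distrib_right mult.assoc)

lemma outer_prod_scaleR_right: "outer_prod x (c *\<^sub>R y) = c *\<^sub>R outer_prod x (y :: real^'n)"
  by (simp add: vec_eq_iff outer_prod_def)

lemma transpose_outer_prod: "transpose (outer_prod x y) = outer_prod y (x :: 'a::comm_semiring_1^'m)"
  by (simp add: vec_eq_iff outer_prod_def transpose_def mult.commute)

lemma transpose_add: "transpose (A + B) = transpose A + transpose (B :: 'a::semiring_1^'n^'m)"
  by (simp add: vec_eq_iff transpose_def)

lemma transpose_diff: "transpose (A - B) = transpose A - transpose (B :: 'a::ring_1^'n^'m)"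
  by (simp add: vec_eq_iff transpose_def)

lemma matrix_diff_ldistrib: "A ** (B - C) = A ** B - A ** (C :: 'a::ring_1^'p^'n)"
  by (simp add: vec_eq_iff matrix_matrix_mult_def sum_subtractf algebra_simps)

lemma matrix_diff_rdistrib: "(A - B) ** C = A ** C - B ** (C :: 'a::ring_1^'p^'n)"
  by (simp add: vec_eq_iff matrix_matrix_mult_def sum_subtractf algebra_simps)

lemma matrix_inv_right: "invertible A \<Longrightarrow> A ** matrix_inv A = mat 1"
  and matrix_inv_left: "invertible A \<Longrightarrow> matrix_inv A ** A = mat 1"
  unfolding invertible_def matrix_inv_def by (metis (mono_tags, lifting) someI_ex)+

lemma transpose_matrix_inv_symmetric:
  fixes A :: "'a::comm_semiring_1^'n^'n"
  assumes "invertible A" "transpose A = A"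
  shows "transpose (matrix_inv A) = matrix_inv A"
proof -
  have "transpose (matrix_inv A) = transpose (matrix_inv A) ** (A ** matrix_inv A)"
    using matrix_inv_right[OF assms(1)] by simp
  also have "\<dots> = transpose (A ** matrix_inv A) ** matrix_inv A"
    by (simp add: matrix_mul_assoc matrix_transpose_mul assms(2))
  finally show ?thesis
    using matrix_inv_right[OF assms(1)] by simp
qed

lemma commute_of_symmetric_product:
  fixes L K B :: "real^'n^'n"
  assumes L: "invertible L" "transpose L = L"
    and sym: "transpose K = K" "transpose B = B"
    and Lg: "L *v g = c *\<^sub>R t"
    and LK: "L ** K = B + c *\<^sub>R mat 1 + outer_prod t g"
  shows "B ** L = L ** B"
proof -
  define N where "N = matrix_inv L"
  define w where "w = N *v t"
  have NL: "N ** L = mat 1" and LN: "L ** N = mat 1"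
    unfolding N_def using matrix_inv_left matrix_inv_right L(1) by blast+
  have g: "g = c *\<^sub>R w"
    using arg_cong[OF Lg, of "\<lambda>v. N *v v"]
    by (simp add: matrix_vector_mul_assoc matrix_vector_mult_scaleR NL w_def)
  have "N ** outer_prod t g = outer_prod w (c *\<^sub>R w)"
    by (simp add: matrix_mul_outer_prod g w_def)
  then have Nt: "N ** outer_prod t g = c *\<^sub>R outer_prod w w"
    by (simp add: outer_prod_scaleR_right)
  have "K = N ** (L ** K)"
    by (simp add: matrix_mul_assoc NL)
  also have "\<dots> = N ** B + c *\<^sub>R N + c *\<^sub>R outer_prod w w"
    unfolding LK by (simp add: matrix_add_ldistrib matrix_scalar_ac Nt)
  finally have K: "K = N ** B + c *\<^sub>R N + c *\<^sub>R outer_prod w w" .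
  have "transpose N = N"
    unfolding N_def using transpose_matrix_inv_symmetric L by blast
  then have "K = B ** N + c *\<^sub>R N + c *\<^sub>R outer_prod w w"
    using arg_cong[OF K, of transpose] sym
    by (simp add: transpose_add transpose_scalar matrix_transpose_mul transpose_outer_prod)
  with K have NB: "N ** B = B ** N"
    by simp
  have "B ** L = L ** (N ** B) ** L"
    by (simp add: matrix_mul_assoc LN)
  also have "\<dots> = L ** B"
    by (simp add: NB matrix_mul_assoc[symmetric] NL)
  finally show ?thesis .
qed

section \<open>The pencil of coefficient matrices\<close>

(* The transpositions (1 2) and (2 3) generate all permutations of the three indices. *)
definition symmetric_tensor :: "('n \<Rightarrow> 'n \<Rightarrow> 'n \<Rightarrow> 'a) \<Rightarrow> bool" where
  "symmetric_tensor \<alpha> \<longleftrightarrow> (\<forall>i j k. \<alpha> i j k = \<alpha> j i k \<and> \<alpha> i j k = \<alpha> i k j)"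

definition coef_pencil :: "('n::finite \<Rightarrow> 'n \<Rightarrow> 'n \<Rightarrow> real) \<Rightarrow> real^'n \<Rightarrow> real^'n^'n" where
  "coef_pencil \<alpha> w = (\<Sum>s\<in>UNIV. w $ s *\<^sub>R coefmat \<alpha> s)"

lemma coef_pencil_nth: "coef_pencil \<alpha> w $ i $ j = (\<Sum>s\<in>UNIV. w $ s * \<alpha> s i j)"
  by (simp add: coef_pencil_def sum_component coefmat_def)

lemma coef_pencil_scaleR: "coef_pencil \<alpha> (c *\<^sub>R w) = c *\<^sub>R coef_pencil \<alpha> w"
  by (simp add: coef_pencil_def scaleR_sum_right)

lemma coef_pencil_0 [simp]: "coef_pencil \<alpha> 0 = 0"
  by (simp add: coef_pencil_def)

lemma continuous_on_det:
  fixes A :: "'a::topological_space \<Rightarrow> real^'n^'n"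
  assumes "\<And>i j. continuous_on S (\<lambda>x. A x $ i $ j)"
  shows "continuous_on S (\<lambda>x. det (A x))"
  unfolding det_def by (intro continuous_intros assms)

context
  fixes \<alpha> :: "'n::finite \<Rightarrow> 'n \<Rightarrow> 'n \<Rightarrow> real"
  assumes \<alpha>: "symmetric_tensor \<alpha>"
begin

(* Both rules are permutative, so simp applies them by ordered rewriting, which sorts the
   indices of alpha into a normal form. *)
lemma symmetric_tensor_swap [simp]: "\<alpha> i j k = \<alpha> j i k" "\<alpha> i j k = \<alpha> i k j"
  using \<alpha> unfolding symmetric_tensor_def by blast+

lemma transpose_coef_pencil: "transpose (coef_pencil \<alpha> w) = coef_pencil \<alpha> w"
  by (simp add: vec_eq_iff transpose_def coef_pencil_nth)

lemma coef_pencil_nth_symmetric: "coef_pencil \<alpha> w $ i $ j = (\<Sum>k\<in>UNIV. \<alpha> i j k * w $ k)"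
  by (simp add: coef_pencil_nth mult.commute)

lemma coef_pencil_mult_vec_nth:
  "(coef_pencil \<alpha> x *v v) $ i = (\<Sum>j\<in>UNIV. \<Sum>k\<in>UNIV. \<alpha> i j k * x $ j * v $ k)"
proof -
  have "(coef_pencil \<alpha> x *v v) $ i = (\<Sum>k\<in>UNIV. \<Sum>j\<in>UNIV. \<alpha> i j k * x $ j * v $ k)"
    by (simp add: matrix_vector_mult_def coef_pencil_nth sum_distrib_left sum_distrib_right mult_ac)
  also have "\<dots> = (\<Sum>j\<in>UNIV. \<Sum>k\<in>UNIV. \<alpha> i j k * x $ j * v $ k)"
    by (rule sum.swap)
  finally show ?thesis .
qed

lemma coef_pencil_mult_nth:
  "(coef_pencil \<alpha> x ** M) $ i $ l = (\<Sum>j\<in>UNIV. \<Sum>k\<in>UNIV. \<alpha> i j k * x $ j * M $ k $ l)"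
  using coef_pencil_mult_vec_nth[of x "column l M" i]
  by (simp add: matrix_matrix_mult_def matrix_vector_mult_def column_def)

lemma inner_coefmat_mult:
  "(coefmat \<alpha> p ** coefmat \<alpha> q *v t) \<bullet> w = (coef_pencil \<alpha> w ** coef_pencil \<alpha> t) $ p $ q"
proof -
  have "(coef_pencil \<alpha> w ** coef_pencil \<alpha> t) $ p $ q
      = (\<Sum>m\<in>UNIV. \<Sum>u\<in>UNIV. \<Sum>r\<in>UNIV. w $ r * \<alpha> p r m * \<alpha> q m u * t $ u)"
    by (simp add: matrix_matrix_mult_def coef_pencil_nth sum_product mult_ac)
  also have "\<dots> = (\<Sum>m\<in>UNIV. \<Sum>r\<in>UNIV. \<Sum>u\<in>UNIV. w $ r * \<alpha> p r m * \<alpha> q m u * t $ u)"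
    by (rule sum.cong[OF refl sum.swap])
  also have "\<dots> = (\<Sum>r\<in>UNIV. \<Sum>m\<in>UNIV. \<Sum>u\<in>UNIV. w $ r * \<alpha> p r m * \<alpha> q m u * t $ u)"
    by (rule sum.swap)
  also have "\<dots> = (\<Sum>r\<in>UNIV. \<Sum>u\<in>UNIV. \<Sum>m\<in>UNIV. w $ r * \<alpha> p r m * \<alpha> q m u * t $ u)"
    by (rule sum.cong[OF refl sum.swap])
  also have "\<dots> = (coefmat \<alpha> p ** coefmat \<alpha> q *v t) \<bullet> w"
    by (simp add: inner_vec_def matrix_vector_mult_def matrix_matrix_mult_def coefmat_def
        sum_distrib_left sum_distrib_right mult_ac)
  finally show ?thesis ..
qed

lemma inner_commut:
  "(commut \<alpha> p q *v t) \<bullet> w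
    = (coef_pencil \<alpha> w ** coef_pencil \<alpha> t - coef_pencil \<alpha> t ** coef_pencil \<alpha> w) $ p $ q"
proof -
  have "coef_pencil \<alpha> t ** coef_pencil \<alpha> w = transpose (coef_pencil \<alpha> w ** coef_pencil \<alpha> t)"
    by (simp add: matrix_transpose_mul transpose_coef_pencil)
  then have "(coef_pencil \<alpha> t ** coef_pencil \<alpha> w) $ p $ q
      = (coef_pencil \<alpha> w ** coef_pencil \<alpha> t) $ q $ p"
    by (simp add: transpose_def)
  then show ?thesis
    by (simp add: commut_def matrix_vector_mult_diff_rdistrib inner_diff_left inner_coefmat_mult)
qed

end

section \<open>Solutions of the system\<close>

locale C2_solution =
  fixes \<alpha> :: "'n::finite \<Rightarrow> 'n \<Rightarrow> 'n \<Rightarrow> real"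
    and \<phi> :: "real^'n \<Rightarrow> real"
    and D\<phi> :: "real^'n \<Rightarrow> ((real^'n) \<Rightarrow>\<^sub>L real)"
    and D2\<phi> :: "real^'n \<Rightarrow> ((real^'n) \<Rightarrow>\<^sub>L ((real^'n) \<Rightarrow>\<^sub>L real))"
    and V :: "(real^'n) set"
  assumes tensor_symmetric: "symmetric_tensor \<alpha>"
    and open_V: "open V"
    and D1: "\<And>x. x \<in> V \<Longrightarrow> (\<phi> has_derivative blinfun_apply (D\<phi> x)) (at x)"
    and D2: "\<And>x. x \<in> V \<Longrightarrow> (D\<phi> has_derivative blinfun_apply (D2\<phi> x)) (at x)"
    and C2: "continuous_on V D2\<phi>"
    and pde: "\<And>x i. x \<in> V \<Longrightarrow>
      D\<phi> x (axis i 1) = (\<Sum>j\<in>UNIV. \<Sum>k\<in>UNIV. \<alpha> i j k * x $ j * D\<phi> x (axis k 1)) + x $ i * \<phi> x"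
begin

definition grad :: "real^'n \<Rightarrow> real^'n" where
  "grad x = (\<chi> k. D\<phi> x (axis k 1))"

definition hessian :: "real^'n \<Rightarrow> real^'n^'n" where
  "hessian x = (\<chi> i l. D2\<phi> x (axis l 1) (axis i 1))"

lemma transpose_hessian: "x \<in> V \<Longrightarrow> transpose (hessian x) = hessian x"
  using second_derivative_symmetric[OF open_V _ D1 D2] C2 open_V
  by (simp add: vec_eq_iff transpose_def hessian_def continuous_on_eq_continuous_at)

lemma pde_grad:
  assumes "x \<in> V"
  shows "(mat 1 - coef_pencil \<alpha> x) *v grad x = \<phi> x *\<^sub>R x"
proof -
  have "grad x $ i = (coef_pencil \<alpha> x *v grad x) $ i + \<phi> x * x $ i" for i
    using pde[OF assms, of i] by (simp add: grad_def coef_pencil_mult_vec_nth[OF tensor_symmetric])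
  then show ?thesis
    by (simp add: vec_eq_iff matrix_vector_mult_diff_rdistrib)
qed

lemma pde_derivative:
  assumes "x \<in> V"
  shows "D2\<phi> x h (axis i 1)
    = (\<Sum>j\<in>UNIV. \<Sum>k\<in>UNIV. \<alpha> i j k * (h $ j * D\<phi> x (axis k 1) + x $ j * D2\<phi> x h (axis k 1)))
      + (h $ i * \<phi> x + x $ i * D\<phi> x h)"
proof -
  have "((\<lambda>y. D\<phi> y (axis i 1)) has_derivative (\<lambda>h. D2\<phi> x h (axis i 1))) (at x)"
    using D2[OF assms] by (auto intro!: derivative_eq_intros)
  then have "((\<lambda>y. (\<Sum>j\<in>UNIV. \<Sum>k\<in>UNIV. \<alpha> i j k * y $ j * D\<phi> y (axis k 1)) + y $ i * \<phi> y)
      has_derivative (\<lambda>h. D2\<phi> x h (axis i 1))) (at x)"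
    using open_V assms pde by (rule has_derivative_transform_within_open)
  moreover have "((\<lambda>y. (\<Sum>j\<in>UNIV. \<Sum>k\<in>UNIV. \<alpha> i j k * y $ j * D\<phi> y (axis k 1)) + y $ i * \<phi> y)
      has_derivative (\<lambda>h. (\<Sum>j\<in>UNIV. \<Sum>k\<in>UNIV. \<alpha> i j k * (h $ j * D\<phi> x (axis k 1) + x $ j * D2\<phi> x h (axis k 1)))
      + (h $ i * \<phi> x + x $ i * D\<phi> x h))) (at x)"
    using D1[OF assms] D2[OF assms]
    by (auto intro!: derivative_eq_intros bounded_linear.has_derivative[OF bounded_linear_vec_nth]
        simp: algebra_simps)
  ultimately have "(\<lambda>h. D2\<phi> x h (axis i 1)) = (\<lambda>h. (\<Sum>j\<in>UNIV. \<Sum>k\<in>UNIV. \<alpha> i j k *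
      (h $ j * D\<phi> x (axis k 1) + x $ j * D2\<phi> x h (axis k 1))) + (h $ i * \<phi> x + x $ i * D\<phi> x h))"
    by (rule has_derivative_unique)
  from fun_cong[OF this, of h] show ?thesis
    by simp
qed

lemma pde_hessian_nth:
  assumes "x \<in> V"
  shows "hessian x $ i $ l = (\<Sum>k\<in>UNIV. \<alpha> i l k * grad x $ k)
    + (\<Sum>j\<in>UNIV. \<Sum>k\<in>UNIV. \<alpha> i j k * x $ j * hessian x $ k $ l)
    + (if i = l then \<phi> x else 0) + x $ i * grad x $ l"
proof -
  have axis: "axis l (1::real) $ j = (if j = l then 1 else 0)" for j
    by (simp add: axis_def)
  have "(\<Sum>j\<in>UNIV. \<Sum>k\<in>UNIV. \<alpha> i j k * (axis l 1 $ j * grad x $ k))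
      = (\<Sum>j\<in>UNIV. axis l 1 $ j * (\<Sum>k\<in>UNIV. \<alpha> i j k * grad x $ k))"
    by (simp add: sum_distrib_left mult_ac)
  also have "\<dots> = (\<Sum>j\<in>UNIV. if j = l then \<Sum>k\<in>UNIV. \<alpha> i j k * grad x $ k else 0)"
    by (intro sum.cong) (auto simp: axis)
  also have "\<dots> = (\<Sum>k\<in>UNIV. \<alpha> i l k * grad x $ k)"
    by simp
  finally show ?thesis
    using pde_derivative[OF assms, of "axis l 1" i]
    by (simp add: hessian_def grad_def distrib_left sum.distrib mult.assoc axis)
qed

lemma pde_hessian:
  assumes "x \<in> V"
  shows "(mat 1 - coef_pencil \<alpha> x) ** hessian x
    = coef_pencil \<alpha> (grad x) + \<phi> x *\<^sub>R mat 1 + outer_prod x (grad x)"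
proof -
  have "hessian x $ i $ l - (coef_pencil \<alpha> x ** hessian x) $ i $ l
      = (coef_pencil \<alpha> (grad x) + \<phi> x *\<^sub>R mat 1 + outer_prod x (grad x)) $ i $ l" for i l
    using pde_hessian_nth[OF assms, of i l]
    by (simp add: coef_pencil_mult_nth[OF tensor_symmetric]
        coef_pencil_nth_symmetric[OF tensor_symmetric] outer_prod_def mat_def)
  then show ?thesis
    by (simp add: vec_eq_iff matrix_diff_rdistrib)
qed

lemma inner_commut_resolvent_eq_0:
  assumes x: "x \<in> V" and "\<phi> x \<noteq> 0" and inv: "invertible (mat 1 - coef_pencil \<alpha> x)"
  shows "(commut \<alpha> p q *v x) \<bullet> (matrix_inv (mat 1 - coef_pencil \<alpha> x) *v x) = 0"
proof -
  define L where "L = mat 1 - coef_pencil \<alpha> x"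
  define w where "w = matrix_inv L *v x"
  have "transpose L = L"
    by (simp add: L_def transpose_diff transpose_coef_pencil[OF tensor_symmetric])
  then have "coef_pencil \<alpha> (grad x) ** L = L ** coef_pencil \<alpha> (grad x)"
    by (rule commute_of_symmetric_product[OF inv[folded L_def] _ transpose_hessian[OF x]
        transpose_coef_pencil[OF tensor_symmetric] pde_grad[OF x, folded L_def]
        pde_hessian[OF x, folded L_def]])
  moreover have "grad x = \<phi> x *\<^sub>R w"
    using arg_cong[OF pde_grad[OF x], of "\<lambda>v. matrix_inv L *v v"] inv
    by (simp add: w_def L_def matrix_vector_mul_assoc matrix_inv_left matrix_vector_mult_scaleR)
  ultimately have "\<phi> x *\<^sub>R coef_pencil \<alpha> w ** coef_pencil \<alpha> x
      = coef_pencil \<alpha> x ** (\<phi> x *\<^sub>R coef_pencil \<alpha> w)"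
    by (simp add: L_def coef_pencil_scaleR matrix_diff_ldistrib matrix_diff_rdistrib)
  then have "\<phi> x *\<^sub>R (coef_pencil \<alpha> w ** coef_pencil \<alpha> x)
      = \<phi> x *\<^sub>R (coef_pencil \<alpha> x ** coef_pencil \<alpha> w)"
    by (simp add: matrix_scalar_ac scalar_matrix_assoc)
  then show ?thesis
    using \<open>\<phi> x \<noteq> 0\<close> inner_commut[OF tensor_symmetric] by (simp add: w_def L_def)
qed

end

theorem mainTheorem7:
  fixes \<alpha> :: "'n::finite \<Rightarrow> 'n \<Rightarrow> 'n \<Rightarrow> real"
    and \<phi> :: "real^'n \<Rightarrow> real"
    and D\<phi> :: "real^'n \<Rightarrow> ((real^'n) \<Rightarrow>\<^sub>L real)"
    and D2\<phi> :: "real^'n \<Rightarrow> ((real^'n) \<Rightarrow>\<^sub>L ((real^'n) \<Rightarrow>\<^sub>L real))"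
    and V :: "(real^'n) set"
  assumes sym: "\<And>i j k. \<alpha> i j k = \<alpha> i k j \<and> \<alpha> i j k = \<alpha> j i k \<and> \<alpha> i j k = \<alpha> j k i
                         \<and> \<alpha> i j k = \<alpha> k i j \<and> \<alpha> i j k = \<alpha> k j i"
    and V: "open V" "0 \<in> V"
    and D1: "\<And>x. x \<in> V \<Longrightarrow> (\<phi> has_derivative blinfun_apply (D\<phi> x)) (at x)"
    and D2: "\<And>x. x \<in> V \<Longrightarrow> (D\<phi> has_derivative blinfun_apply (D2\<phi> x)) (at x)"
    and C2: "continuous_on V D2\<phi>"
    and pde: "\<And>x i. x \<in> V \<Longrightarrow>
      D\<phi> x (axis i 1) = (\<Sum>j\<in>UNIV. \<Sum>k\<in>UNIV. \<alpha> i j k * x $ j * D\<phi> x (axis k 1)) + x $ i * \<phi> x"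
    and nz: "\<phi> 0 \<noteq> 0"
  shows "\<exists>U. open U \<and> 0 \<in> U \<and>
    (\<forall>t\<in>U. \<forall>i j. (commut \<alpha> i j *v t) \<bullet>
        (matrix_inv (mat 1 - (\<Sum>k\<in>UNIV. t $ k *\<^sub>R coefmat \<alpha> k)) *v t) = 0)"
proof -
  have "symmetric_tensor \<alpha>"
    using sym unfolding symmetric_tensor_def by blast
  then interpret C2_solution \<alpha> \<phi> D\<phi> D2\<phi> V
    using V(1) D1 D2 C2 pde by unfold_locales
  define U where "U = V \<inter> \<phi> -` (- {0}) \<inter> {t. det (mat 1 - coef_pencil \<alpha> t) \<noteq> 0}"
  have "continuous_on V \<phi>"
    using D1 by (meson continuous_at_imp_continuous_on has_derivative_continuous)
  moreover have "continuous_on UNIV (\<lambda>t. det (mat 1 - coef_pencil \<alpha> t))"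
    by (intro continuous_on_det) (simp add: coef_pencil_nth mat_def continuous_intros)
  ultimately have "open U"
    unfolding U_def using V(1)
    by (intro open_Int continuous_open_preimage open_Collect_neq continuous_on_const) auto
  moreover have "0 \<in> U"
    using V nz by (simp add: U_def)
  moreover have "\<forall>t\<in>U. \<forall>i j. (commut \<alpha> i j *v t) \<bullet> (matrix_inv (mat 1 - coef_pencil \<alpha> t) *v t) = 0"
    by (simp add: U_def inner_commut_resolvent_eq_0 invertible_det_nz)
  ultimately show ?thesis
    unfolding coef_pencil_def by blast
qed

end
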